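(* Let $d,n,k\ge1$, let $x_0,x_1,\dots,x_n\in\mathbb{R}^d$, and let $T_1,\dots,T_k:\mathbb{R}^d\to\mathbb{R}^d$ be maps. Define $V=\operatorname{span}\{T_1(x_0)-x_0,\dots,T_k(x_0)-x_0\}$, and for each $i\in\{1,\dots,n\}$ let $z_i$ be the orthogonal projection of $x_i-x_0$ onto $V^\perp$. Let $M^*$ be the minimizer of $$\min_M \tfrac12\|M\|^2 \quad\text{subject to}\quad z_i^T M z_i\ge 2\ \ \forall i\in\{1,\dots,n\},\quad M\succeq 0.$$ Then $M^*$ is the minimizer of $$\min_M \tfrac12\|M\|^2 \quad\text{subject to}\quad \begin{cases}(x_i-x_0)^T M (x_i-x_0)\ge 2 & \forall i\in\{1,\dots,n\},\\ (T_j(x_0)-x_0)^T M (T_j(x_0)-x_0)=0 & \forall j\in\{1,\dots,k\},\\ M\succeq 0.\end{cases}$$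
   Context: $M$ ranges over real $d\times d$ matrices; $\|M\|$ is the Frobenius norm, $\|M\|^2=\sum_{ij}M_{ij}^2$; $M\succeq 0$ means $M$ is symmetric positive semidefinite. $V^\perp$ is the orthogonal complement of $V$ in $\mathbb{R}^d$ with respect to the standard inner product. *)

theory Defs
  imports "HOL-Analysis.Analysis"
begin

definition orth_proj :: "('a::euclidean_space) set \<Rightarrow> 'a \<Rightarrow> 'a" where
  "orth_proj W v = (THE p. p \<in> W \<and> v - p \<in> orthogonal_comp W)"

definition frob_norm :: "real^'n^'n \<Rightarrow> real" where
  "frob_norm M = sqrt (\<Sum>i\<in>UNIV. \<Sum>j\<in>UNIV. (M $ i $ j)^2)"

definition psd :: "real^'n^'n \<Rightarrow> bool" where
  "psd M \<longleftrightarrow> transpose M = M \<and> (\<forall>v. 0 \<le> v \<bullet> (M *v v))"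

definition is_the_minimizer :: "('a \<Rightarrow> real) \<Rightarrow> 'a set \<Rightarrow> 'a \<Rightarrow> bool" where
  "is_the_minimizer f S M \<longleftrightarrow> M \<in> S \<and> (\<forall>M'\<in>S. M' \<noteq> M \<longrightarrow> f M < f M')"

end

theory Submission
  imports Defs
begin

text \<open>Let \<open>P\<close> be the orthogonal projection onto \<open>V\<^sup>\<bottom>\<close>. The map \<open>M \<mapsto> P M P\<close> preserves
  positive semidefiniteness and the constraints \<open>z\<^sub>i\<^sup>T M z\<^sub>i \<ge> 2\<close> (as \<open>P z\<^sub>i = z\<^sub>i\<close>), and it is an
  orthogonal projection for the Frobenius inner product, so it does not increase \<open>\<parallel>M\<parallel>\<close>.
  Hence the unique minimizer satisfies \<open>M\<^sup>* = P M\<^sup>* P\<close> and vanishes on \<open>V\<close>. Conversely, a positive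
  semidefinite \<open>M\<close> with \<open>v\<^sup>T M v = 0\<close> on the generators of \<open>V\<close> vanishes on \<open>V\<close>. For every \<open>M\<close>
  vanishing on \<open>V\<close> the quadratic forms at \<open>x\<^sub>i - x\<^sub>0\<close> and at \<open>z\<^sub>i\<close> agree, so the second feasible
  set is contained in the first and contains \<open>M\<^sup>*\<close>.\<close>

lemma orth_proj_eq_iff:
  fixes W :: "'a::euclidean_space set"
  assumes "subspace W"
  shows "orth_proj W v = p \<longleftrightarrow> p \<in> W \<and> v - p \<in> W\<^sup>\<bottom>"
proof -
  obtain a b where a: "a \<in> W" and b: "b \<in> W\<^sup>\<bottom>" and v: "v = a + b"
    using subspace_sum_orthogonal_comp[OF assms] set_plus_elim by blast
  have "q = a" if q: "q \<in> W" "v - q \<in> W\<^sup>\<bottom>" for q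
  proof -
    have "a - q \<in> W"
      using a q assms by (simp add: subspace_diff)
    moreover have "a - q = (v - q) - b"
      using v by simp
    then have "a - q \<in> W\<^sup>\<bottom>"
      using b q subspace_orthogonal_comp by (metis subspace_diff)
    ultimately have "a - q = 0"
      using orthogonal_Int_0[OF assms] by blast
    then show "q = a"
      by simp
  qed
  then have unique: "\<exists>!p. p \<in> W \<and> v - p \<in> W\<^sup>\<bottom>"
    using a b v by (intro ex1I[of _ a]) auto
  show ?thesis
  proof
    assume "orth_proj W v = p"
    then show "p \<in> W \<and> v - p \<in> W\<^sup>\<bottom>"
      using theI'[OF unique] unfolding orth_proj_def by simp
  next
    assume "p \<in> W \<and> v - p \<in> W\<^sup>\<bottom>"
    then show "orth_proj W v = p"
      unfolding orth_proj_def by (rule the1_equality[OF unique])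
  qed
qed

lemma
  fixes W :: "'a::euclidean_space set"
  assumes "subspace W"
  shows orth_proj_in: "orth_proj W v \<in> W"
    and orth_proj_diff_in_orthogonal_comp: "v - orth_proj W v \<in> W\<^sup>\<bottom>"
  using orth_proj_eq_iff[OF assms, of v "orth_proj W v"] by simp_all

lemma orth_proj_id:
  fixes W :: "'a::euclidean_space set"
  assumes "subspace W" and "w \<in> W"
  shows "orth_proj W w = w"
  using assms by (simp add: orth_proj_eq_iff subspace_0 subspace_orthogonal_comp)

lemma orth_proj_eq_0:
  fixes W :: "'a::euclidean_space set"
  assumes "subspace W" and "v \<in> W\<^sup>\<bottom>"
  shows "orth_proj W v = 0"
  using assms by (simp add: orth_proj_eq_iff subspace_0)

lemma linear_orth_proj:
  fixes W :: "'a::euclidean_space set"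
  assumes "subspace W"
  shows "linear (orth_proj W)"
proof (rule linearI)
  have W': "subspace (W\<^sup>\<bottom>)"
    by (rule subspace_orthogonal_comp)
  note in_W = orth_proj_in[OF assms] and diff_in_W' = orth_proj_diff_in_orthogonal_comp[OF assms]
  fix x y :: 'a and c :: real
  have "(x + y) - (orth_proj W x + orth_proj W y) = (x - orth_proj W x) + (y - orth_proj W y)"
    by simp
  then have "(x + y) - (orth_proj W x + orth_proj W y) \<in> W\<^sup>\<bottom>"
    using diff_in_W' W' by (simp only: subspace_add)
  then show "orth_proj W (x + y) = orth_proj W x + orth_proj W y"
    using in_W assms by (simp add: orth_proj_eq_iff subspace_add)
  have "c *\<^sub>R x - c *\<^sub>R orth_proj W x = c *\<^sub>R (x - orth_proj W x)"
    by (simp add: scaleR_diff_right)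
  then have "c *\<^sub>R x - c *\<^sub>R orth_proj W x \<in> W\<^sup>\<bottom>"
    using diff_in_W' W' by (simp only: subspace_scale)
  then show "orth_proj W (c *\<^sub>R x) = c *\<^sub>R orth_proj W x"
    using in_W assms by (simp add: orth_proj_eq_iff subspace_scale)
qed

lemma inner_orth_proj_commute:
  fixes W :: "'a::euclidean_space set"
  assumes "subspace W"
  shows "orth_proj W a \<bullet> b = a \<bullet> orth_proj W b"
proof -
  have orth: "w \<bullet> u = 0" if "w \<in> W" "u \<in> W\<^sup>\<bottom>" for w u
    using that by (simp add: orthogonal_comp_def orthogonal_def)
  note in_W = orth_proj_in[OF assms] and diff_in_W' = orth_proj_diff_in_orthogonal_comp[OF assms]
  have "orth_proj W a \<bullet> b = orth_proj W a \<bullet> orth_proj W b + orth_proj W a \<bullet> (b - orth_proj W b)"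
    by (simp add: inner_diff_right)
  also have "\<dots> = orth_proj W a \<bullet> orth_proj W b"
    using orth in_W diff_in_W' by simp
  also have "\<dots> = (a - orth_proj W a) \<bullet> orth_proj W b + orth_proj W a \<bullet> orth_proj W b"
    using orth in_W diff_in_W' by (simp add: inner_commute)
  also have "\<dots> = a \<bullet> orth_proj W b"
    by (simp add: inner_diff_left)
  finally show ?thesis .
qed

lemma matrix_orth_proj_mult_vector:
  fixes W :: "(real^'n) set"
  assumes "subspace W"
  shows "matrix (orth_proj W) *v v = orth_proj W v"
  using matrix_vector_mul(2)[OF linear_orth_proj[OF assms]] by metis

lemma transpose_matrix_orth_proj:
  fixes W :: "(real^'n) set"
  assumes "subspace W"
  shows "transpose (matrix (orth_proj W)) = matrix (orth_proj W)"
  using assms by (metis adjoint_unique inner_orth_proj_commute linear_orth_proj matrix_adjoint)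

lemma matrix_orth_proj_idem:
  fixes W :: "(real^'n) set"
  assumes "subspace W"
  shows "matrix (orth_proj W) ** matrix (orth_proj W) = matrix (orth_proj W)"
  using assms
  by (simp add: matrix_eq matrix_vector_mul_assoc[symmetric] matrix_orth_proj_mult_vector
      orth_proj_id orth_proj_in)

lemma frob_norm_eq_norm: "frob_norm (M :: real^'n^'n) = norm M"
  unfolding frob_norm_def norm_vec_def L2_set_def by (simp add: sum_nonneg)

lemma inner_matrix_eq_trace: "(A :: real^'n^'m) \<bullet> B = trace (transpose A ** B)"
  unfolding inner_vec_def trace_def matrix_matrix_mult_def transpose_def
  by simp (rule sum.swap)

lemma norm_compression_le:
  fixes M P :: "real^'n^'n"
  assumes PT: "transpose P = P" and PP: "P ** P = P"
  shows "norm (P ** M ** P) \<le> norm M"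
proof -
  define N where "N = P ** M ** P"
  define X where "X = P ** transpose M ** P ** M"
  have PP': "A ** P ** P = A ** P" for A
    using PP by (simp add: matrix_mul_assoc[symmetric])
  have "N \<bullet> N = trace (X ** P)"
    using PT by (simp add: PP' N_def X_def inner_matrix_eq_trace matrix_transpose_mul matrix_mul_assoc)
  also have "\<dots> = trace (P ** X)"
    by (rule trace_mul_sym)
  also have "\<dots> = N \<bullet> M"
    using PT by (simp add: PP N_def X_def inner_matrix_eq_trace matrix_transpose_mul matrix_mul_assoc)
  finally have "orthogonal N (M - N)"
    by (simp add: orthogonal_def inner_diff_right inner_commute)
  then have "(norm M)\<^sup>2 = (norm N)\<^sup>2 + (norm (M - N))\<^sup>2"
    using norm_add_Pythagorean[of N "M - N"] by simp
  then show ?thesis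
    unfolding N_def[symmetric] by (simp add: power2_le_imp_le)
qed

lemma is_the_minimizer_unique:
  assumes "is_the_minimizer f S M" and "N \<in> S" and "f N \<le> f M"
  shows "N = M"
  using assms unfolding is_the_minimizer_def by force

lemma is_the_minimizer_subset:
  assumes "is_the_minimizer f S M" and "S' \<subseteq> S" and "M \<in> S'"
  shows "is_the_minimizer f S' M"
  using assms unfolding is_the_minimizer_def by blast

lemma inner_symmetric_matrix_commute:
  fixes M :: "real^'n^'n"
  assumes "transpose M = M"
  shows "a \<bullet> (M *v b) = (M *v a) \<bullet> b"
  by (metis assms dot_lmul_matrix transpose_matrix_vector)

lemma quadratic_form_compression:
  fixes M P :: "real^'n^'n"
  assumes "transpose P = P"
  shows "u \<bullet> ((P ** M ** P) *v u) = (P *v u) \<bullet> (M *v (P *v u))"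
  using assms by (simp add: matrix_vector_mul_assoc[symmetric] inner_symmetric_matrix_commute)

lemma psd_compression:
  fixes M P :: "real^'n^'n"
  assumes "psd M" and "transpose P = P"
  shows "psd (P ** M ** P)"
  using assms
  by (simp add: psd_def quadratic_form_compression matrix_transpose_mul matrix_mul_assoc)

lemma nonneg_quadratic_imp_linear_coeff_0:
  fixes a b :: real
  assumes nonneg: "\<And>t. 0 \<le> a * t\<^sup>2 - 2 * b * t" and "0 \<le> b"
  shows "b = 0"
proof (rule ccontr)
  assume "b \<noteq> 0"
  with \<open>0 \<le> b\<close> have b: "0 < b" by simp
  define t where "t = b / (\<bar>a\<bar> + 1)"
  have t: "0 < t"
    using b by (simp add: t_def)
  have "\<bar>a\<bar> * t \<le> b"
    using b by (simp add: t_def field_simps)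
  then have "a * t \<le> b"
    using t mult_right_mono[OF abs_ge_self[of a], of t] by linarith
  then have "a * t\<^sup>2 \<le> b * t"
    using t by (simp add: power2_eq_square mult_right_mono mult.assoc[symmetric])
  moreover have "0 < b * t"
    using b t by simp
  ultimately show False
    using nonneg[of t] by linarith
qed

lemma psd_quadratic_form_eq_0_imp_kernel:
  fixes M :: "real^'n^'n"
  assumes "psd M" and v: "v \<bullet> (M *v v) = 0"
  shows "M *v v = 0"
proof -
  have sym: "transpose M = M" and pos: "\<And>u. 0 \<le> u \<bullet> (M *v u)"
    using \<open>psd M\<close> by (auto simp: psd_def)
  define y where "y = M *v v"
  have "0 \<le> (y \<bullet> (M *v y)) * t\<^sup>2 - 2 * (y \<bullet> y) * t" for t
  proof -
    have "0 \<le> (v - t *\<^sub>R y) \<bullet> (M *v (v - t *\<^sub>R y))"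
      by (rule pos)
    also have "\<dots> = v \<bullet> (M *v v) - t * (v \<bullet> (M *v y)) - t * (y \<bullet> y) + t * t * (y \<bullet> (M *v y))"
      by (simp add: y_def algebra_simps inner_diff_left inner_diff_right)
    also have "v \<bullet> (M *v y) = y \<bullet> y"
      using sym by (simp add: y_def inner_symmetric_matrix_commute)
    finally show ?thesis
      using v by (simp add: power2_eq_square algebra_simps)
  qed
  then have "y \<bullet> y = 0"
    by (rule nonneg_quadratic_imp_linear_coeff_0) simp
  then show ?thesis
    by (simp add: y_def)
qed

lemma psd_kernel_contains_span:
  fixes M :: "real^'n^'n"
  assumes "psd M" and "\<And>w. w \<in> G \<Longrightarrow> w \<bullet> (M *v w) = 0" and "v \<in> span G"
  shows "M *v v = 0"
  using assms
  by (auto intro: linear_eq_0_on_span[OF matrix_vector_mul_linear] psd_quadratic_form_eq_0_imp_kernel)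

lemma quadratic_form_eq_mod_kernel:
  fixes M :: "real^'n^'n"
  assumes "transpose M = M" and "M *v (u - v) = 0"
  shows "u \<bullet> (M *v u) = v \<bullet> (M *v v)"
proof -
  have Mu: "M *v u = M *v v"
    using assms(2) by (simp add: matrix_vector_mult_diff_distrib)
  have "u \<bullet> (M *v u) = v \<bullet> (M *v v) + (u - v) \<bullet> (M *v v)"
    by (simp add: Mu inner_diff_left)
  also have "(u - v) \<bullet> (M *v v) = 0"
    using assms by (simp add: inner_symmetric_matrix_commute)
  finally show ?thesis
    by simp
qed

lemma frob_minimizer_vanishes_on_subspace:
  fixes V :: "(real^'d) set" and z :: "'i \<Rightarrow> real^'d"
  assumes V: "subspace V" and z: "\<And>i. i \<in> I \<Longrightarrow> z i \<in> V\<^sup>\<bottom>"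
    and min: "is_the_minimizer (\<lambda>M. (1/2) * (frob_norm M)\<^sup>2)
                {M. (\<forall>i\<in>I. c i \<le> z i \<bullet> (M *v z i)) \<and> psd M} Mstar"
    and w: "w \<in> V"
  shows "Mstar *v w = 0"
proof -
  have W: "subspace (V\<^sup>\<bottom>)"
    by (rule subspace_orthogonal_comp)
  define P :: "real^'d^'d" where "P = matrix (orth_proj (V\<^sup>\<bottom>))"
  have PT: "transpose P = P" and PP: "P ** P = P"
    using W by (simp_all add: P_def transpose_matrix_orth_proj matrix_orth_proj_idem)
  have Pv: "P *v v = orth_proj (V\<^sup>\<bottom>) v" for v
    using W by (simp add: P_def matrix_orth_proj_mult_vector)
  have Mstar: "psd Mstar" "\<And>i. i \<in> I \<Longrightarrow> c i \<le> z i \<bullet> (Mstar *v z i)"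
    using min by (auto simp: is_the_minimizer_def)
  have "P ** Mstar ** P = Mstar"
  proof (rule is_the_minimizer_unique[OF min])
    have "z i \<bullet> ((P ** Mstar ** P) *v z i) = z i \<bullet> (Mstar *v z i)" if "i \<in> I" for i
      using PT W z[OF that] by (simp add: quadratic_form_compression Pv orth_proj_id)
    then show "P ** Mstar ** P \<in> {M. (\<forall>i\<in>I. c i \<le> z i \<bullet> (M *v z i)) \<and> psd M}"
      using Mstar PT by (simp add: psd_compression)
    show "(1/2) * (frob_norm (P ** Mstar ** P))\<^sup>2 \<le> (1/2) * (frob_norm Mstar)\<^sup>2"
      using norm_compression_le[OF PT PP] by (simp add: frob_norm_eq_norm power_mono)
  qed
  moreover have "P *v w = 0"
    using W w orthogonal_comp_subset by (auto simp: Pv intro: orth_proj_eq_0)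
  ultimately show ?thesis
    by (metis matrix_vector_mul_assoc matrix_vector_mult_0_right)
qed

theorem theorem3:
  fixes n k :: nat
    and x :: "nat \<Rightarrow> real^'d"
    and T :: "nat \<Rightarrow> real^'d \<Rightarrow> real^'d"
    and Mstar :: "real^'d^'d"
  assumes "n \<ge> 1" and "k \<ge> 1"
  defines "V \<equiv> span {T j (x 0) - x 0 | j. j \<in> {1..k}}"
  defines "z \<equiv> (\<lambda>i. orth_proj (orthogonal_comp V) (x i - x 0))"
  assumes "is_the_minimizer (\<lambda>M. (1/2) * (frob_norm M)^2)
             {M. (\<forall>i\<in>{1..n}. z i \<bullet> (M *v z i) \<ge> 2) \<and> psd M} Mstar"
  shows "is_the_minimizer (\<lambda>M. (1/2) * (frob_norm M)^2)
             {M. (\<forall>i\<in>{1..n}. (x i - x 0) \<bullet> (M *v (x i - x 0)) \<ge> 2)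
               \<and> (\<forall>j\<in>{1..k}. (T j (x 0) - x 0) \<bullet> (M *v (T j (x 0) - x 0)) = 0)
               \<and> psd M} Mstar"
proof -
  have V: "subspace V" and W: "subspace (V\<^sup>\<bottom>)"
    by (simp_all add: V_def subspace_orthogonal_comp)
  have generators_in_V: "T j (x 0) - x 0 \<in> V" if "j \<in> {1..k}" for j
    unfolding V_def using that by (intro span_base) blast
  have "x i - x 0 - z i \<in> V" for i
    using orth_proj_diff_in_orthogonal_comp[OF W] orthogonal_comp_self[OF V] by (simp add: z_def)
  then have reduce: "(x i - x 0) \<bullet> (M *v (x i - x 0)) = z i \<bullet> (M *v z i)"
    if "psd M" and "\<And>w. w \<in> V \<Longrightarrow> M *v w = 0" for M i
    using that by (simp add: psd_def quadratic_form_eq_mod_kernel)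
  have vanishes_on_V: "M *v w = 0"
    if "psd M" and "\<forall>j\<in>{1..k}. (T j (x 0) - x 0) \<bullet> (M *v (T j (x 0) - x 0)) = 0"
      and "w \<in> V" for M w
    using psd_kernel_contains_span[OF that(1) _ that(3)[unfolded V_def]] that(2) by blast
  have Mstar_vanishes_on_V: "Mstar *v w = 0" if "w \<in> V" for w
    using frob_minimizer_vanishes_on_subspace[OF V _ assms(5) that] orth_proj_in[OF W]
    by (simp add: z_def)
  show ?thesis
  proof (rule is_the_minimizer_subset[OF assms(5)], goal_cases subset member)
    case subset
    show ?case
      by clarify (metis reduce vanishes_on_V)
  next
    case member
    show ?case
      using assms(5) Mstar_vanishes_on_V generators_in_V
      by (auto simp: is_the_minimizer_def reduce)
  qed
qed

end
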